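(* Assume $n\ge3$. Let $\phi=\sum_{a\in\{1,\dots,n\}^\ell}c_a\,x^{a_1}\cdots x^{a_\ell}$ ($c_a\in\mathbb{C}$) be a homogeneous polynomial of degree $\ell$ satisfying $\sum_{b,c}\eta^{bc}\partial_b\partial_c\phi=0$, and let $\tilde\phi=\sum_a c_a\,\tilde x^{a_1}\tilde x^{a_2}\cdots\tilde x^{a_\ell}$ (composition of operators). Then $\tilde\phi(1)=\phi$.
   Context: $(\eta_{ab})$ is a non-degenerate symmetric complex $n\times n$ matrix with inverse $(\eta^{ab})$; $\partial_a=\partial/\partial x^a$, $\partial^a=\sum_b\eta^{ab}\partial_b$, $x_bx^b=\sum_{b,c}\eta_{bc}x^bx^c$. $H=-\frac12\sum_a(x^a\partial_a+\partial_ax^a)$ acts on homogeneous polynomials of degree $d$ by the scalar $-d-\frac n2$. The operator $\tilde x^a$ on $\mathbb{C}[x^1,\dots,x^n]$ is $\tilde x^a=x^a+\frac1{2H+4}\,x_bx^b\,\partial^a$ (the element $P(x^a+I)$ of the reduction algebra): explicitly, for $\psi$ homogeneous of degree $d\ge1$, $\tilde x^a\psi=x^a\psi+\frac{1}{2-2d-n}\,x_bx^b\,\partial^a\psi$, and $\tilde x^a\psi=x^a\psi$ for $\psi$ constant. *)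

theory Defs
  imports Complex_Main "HOL-Library.Cardinality"
begin

text \<open>Polynomials in \<open>\<complex>[x^a : a \<in> 'n]\<close> (variables indexed by a finite type \<open>'n\<close>,
  \<open>n = CARD('n)\<close>) are represented by their coefficient functions on exponent vectors
  \<open>m :: 'n \<Rightarrow> nat\<close>.\<close>

type_synonym 'n cpoly = "('n \<Rightarrow> nat) \<Rightarrow> complex"

definition mdeg :: "('n::finite \<Rightarrow> nat) \<Rightarrow> nat" where
  "mdeg m = (\<Sum>i\<in>UNIV. m i)"

definition pone :: "'n cpoly" where
  "pone = (\<lambda>m. if m = (\<lambda>_. 0) then 1 else 0)"

definition mulx :: "'n \<Rightarrow> 'n cpoly \<Rightarrow> 'n cpoly" where
  "mulx a p = (\<lambda>m. if 0 < m a then p (m(a := m a - 1)) else 0)"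

definition pd :: "'n \<Rightarrow> 'n cpoly \<Rightarrow> 'n cpoly" where
  "pd a p = (\<lambda>m. of_nat (m a + 1) * p (m(a := m a + 1)))"

text \<open>\<open>\<partial>^a = \<Sum>_b \<eta>^{ab} \<partial>_b\<close>, where \<open>etaI\<close> is the inverse matrix \<open>(\<eta>^{ab})\<close>\<close>
definition pdup :: "('n::finite \<Rightarrow> 'n \<Rightarrow> complex) \<Rightarrow> 'n \<Rightarrow> 'n cpoly \<Rightarrow> 'n cpoly" where
  "pdup etaI a p = (\<lambda>m. \<Sum>b\<in>UNIV. etaI a b * pd b p m)"

definition mulQ :: "('n::finite \<Rightarrow> 'n \<Rightarrow> complex) \<Rightarrow> 'n cpoly \<Rightarrow> 'n cpoly" where
  "mulQ eta p = (\<lambda>m. \<Sum>b\<in>UNIV. \<Sum>c\<in>UNIV. eta b c * mulx b (mulx c p) m)"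

definition lap :: "('n::finite \<Rightarrow> 'n \<Rightarrow> complex) \<Rightarrow> 'n cpoly \<Rightarrow> 'n cpoly" where
  "lap etaI p = (\<lambda>m. \<Sum>b\<in>UNIV. \<Sum>c\<in>UNIV. etaI b c * pd b (pd c p) m)"

text \<open>\<open>(2H+4)^{-1}\<close>: \<open>H\<close> acts on degree \<open>d\<close> homogeneous polynomials by \<open>-d - n/2\<close>, so
  \<open>2H+4\<close> acts by \<open>4 - 2d - n\<close>.  (Only applied to polynomials with no components of
  degree \<open>< 2\<close>, where this is nonzero for \<open>n \<ge> 3\<close>.)\<close>
definition inv2H4 :: "'n::finite cpoly \<Rightarrow> 'n cpoly" where
  "inv2H4 p = (\<lambda>m. p m / (4 - 2 * of_nat (mdeg m) - of_nat CARD('n)))"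

definition xtilde :: "('n::finite \<Rightarrow> 'n \<Rightarrow> complex) \<Rightarrow> ('n \<Rightarrow> 'n \<Rightarrow> complex)
    \<Rightarrow> 'n \<Rightarrow> 'n cpoly \<Rightarrow> 'n cpoly" where
  "xtilde eta etaI a p = (\<lambda>m. mulx a p m + inv2H4 (mulQ eta (pdup etaI a p)) m)"

definition polyOf :: "nat \<Rightarrow> ('n list \<Rightarrow> complex) \<Rightarrow> 'n cpoly" where
  "polyOf l c = (\<lambda>m. \<Sum>as\<in>{as. length as = l}. c as * foldr mulx as pone m)"

definition tildeOf :: "('n::finite \<Rightarrow> 'n \<Rightarrow> complex) \<Rightarrow> ('n \<Rightarrow> 'n \<Rightarrow> complex)
    \<Rightarrow> nat \<Rightarrow> ('n list \<Rightarrow> complex) \<Rightarrow> 'n cpoly" where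
  "tildeOf eta etaI l c = (\<lambda>m. \<Sum>as\<in>{as. length as = l}. c as * foldr (xtilde eta etaI) as pone m)"

end

theory Submission
  imports Defs
begin

text \<open>Write \<open>Q = x\<^sub>b x\<^sup>b\<close> and \<open>\<Delta>\<close> for the Laplacian.  From the commutation relations
  \<open>\<Delta>(x\<^sup>a \<psi>) = x\<^sup>a \<Delta>\<psi> + 2 \<partial>\<^sup>a\<psi>\<close> and \<open>\<Delta>(Q \<chi>) = Q \<Delta>\<chi> + (2n + 4 deg \<chi>) \<chi>\<close> one sees that the
  factor \<open>(2H+4)\<^sup>-\<^sup>1\<close> in \<open>x\<tilde>\<^sup>a\<close> is exactly what makes \<open>x\<tilde>\<^sup>a\<close> map homogeneous harmonic
  polynomials to harmonic ones.  Hence \<open>\<phi>\<tilde>(1)\<close> is harmonic; it also agrees with \<open>\<phi>\<close>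
  modulo \<open>Q\<close>.  So \<open>\<phi>\<tilde>(1) - \<phi> = Q T\<close> is harmonic with \<open>T\<close> homogeneous, and the identity
  \<open>\<Delta>(Q\<^sup>k\<^sup>+\<^sup>1 T) = Q\<^sup>k\<^sup>+\<^sup>1 \<Delta>T + c\<^sub>k Q\<^sup>k T\<close> with \<open>c\<^sub>k \<noteq> 0\<close> shows that a harmonic
  \<open>Q\<^sup>k\<^sup>+\<^sup>1 T\<close> equals \<open>Q\<^sup>k\<^sup>+\<^sup>2 T'\<close> with \<open>deg T' = deg T - 2\<close>.  Iterating until the degree
  becomes negative gives \<open>Q T = 0\<close>.\<close>

definition cpoly_linear :: "('n cpoly \<Rightarrow> 'n cpoly) \<Rightarrow> bool" where
  "cpoly_linear L \<longleftrightarrow>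
     (\<forall>p q. L (\<lambda>m. p m + q m) = (\<lambda>m. L p m + L q m)) \<and> (\<forall>k p. L (\<lambda>m. k * p m) = (\<lambda>m. k * L p m))"

lemma cpoly_linear_add: "cpoly_linear L \<Longrightarrow> L (\<lambda>m. p m + q m) = (\<lambda>m. L p m + L q m)"
  unfolding cpoly_linear_def by blast

lemma cpoly_linear_scale: "cpoly_linear L \<Longrightarrow> L (\<lambda>m. k * p m) = (\<lambda>m. k * L p m)"
  unfolding cpoly_linear_def by blast

lemma cpoly_linear_zero: "cpoly_linear L \<Longrightarrow> L (\<lambda>_. 0) = (\<lambda>_. 0)"
  using cpoly_linear_scale[of L 0 "\<lambda>_. 0"] by simp

lemma cpoly_linear_sum:
  assumes "cpoly_linear L" "finite I"
  shows "L (\<lambda>m. \<Sum>i\<in>I. f i m) = (\<lambda>m. \<Sum>i\<in>I. L (f i) m)"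
  using assms(2)
proof (induction I rule: finite_induct)
  case empty
  then show ?case using cpoly_linear_zero[OF assms(1)] by simp
next
  case (insert x F)
  then show ?case using cpoly_linear_add[OF assms(1), of "f x" "\<lambda>m. \<Sum>i\<in>F. f i m"] by simp
qed

lemma cpoly_linear_funpow: "cpoly_linear L \<Longrightarrow> cpoly_linear (L ^^ k)"
  by (induction k) (auto simp: cpoly_linear_def)

lemma cpoly_linear_mulx: "cpoly_linear (mulx a)"
  unfolding cpoly_linear_def mulx_def by (auto simp: fun_eq_iff)

lemma cpoly_linear_pd: "cpoly_linear (pd a)"
  unfolding cpoly_linear_def pd_def by (auto simp: fun_eq_iff algebra_simps)

lemma cpoly_linear_mulQ: "cpoly_linear (mulQ eta)"
  unfolding cpoly_linear_def mulQ_def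
  by (auto simp: fun_eq_iff cpoly_linear_add[OF cpoly_linear_mulx] cpoly_linear_scale[OF cpoly_linear_mulx]
      algebra_simps sum.distrib sum_distrib_left)

lemma cpoly_linear_lap: "cpoly_linear (lap etaI)"
  unfolding cpoly_linear_def lap_def
  by (auto simp: fun_eq_iff cpoly_linear_add[OF cpoly_linear_pd] cpoly_linear_scale[OF cpoly_linear_pd]
      algebra_simps sum.distrib sum_distrib_left)

lemma cpoly_linear_pdup: "cpoly_linear (pdup etaI a)"
  unfolding cpoly_linear_def pdup_def
  by (auto simp: fun_eq_iff cpoly_linear_add[OF cpoly_linear_pd] cpoly_linear_scale[OF cpoly_linear_pd]
      algebra_simps sum.distrib sum_distrib_left)

lemma mdeg_fun_upd: "mdeg (m(a := k)) + m a = mdeg m + k"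
proof -
  have "mdeg (m(a := k)) = k + (\<Sum>i\<in>UNIV-{a}. m i)" "mdeg m = m a + (\<Sum>i\<in>UNIV-{a}. m i)"
    unfolding mdeg_def by (simp_all add: sum.remove[of UNIV a])
  then show ?thesis by simp
qed

lemma pd_mulx: "pd a (mulx b p) = (\<lambda>m. mulx b (pd a p) m + (if a = b then p m else 0))"
  unfolding pd_def mulx_def
  by (cases "a = b") (auto simp: fun_eq_iff fun_upd_twist algebra_simps of_nat_diff)

lemma mulx_commute: "mulx a (mulx b p) = mulx b (mulx a p)"
  unfolding mulx_def by (cases "a = b") (auto simp: fun_eq_iff fun_upd_twist)

lemma pd_commute: "pd a (pd b p) = pd b (pd a p)"
  unfolding pd_def by (cases "a = b") (auto simp: fun_eq_iff fun_upd_twist)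

lemma sum_mulx_pd: "(\<Sum>b\<in>UNIV. mulx b (pd b p) m) = of_nat (mdeg m) * p m"
proof -
  have "mulx b (pd b p) m = of_nat (m b) * p m" for b
    unfolding mulx_def pd_def by auto
  then show ?thesis by (simp add: mdeg_def sum_distrib_right)
qed

lemma mulx_mulQ: "mulx a (mulQ eta p) = mulQ eta (mulx a p)"
  unfolding mulQ_def
  by (simp add: cpoly_linear_sum[OF cpoly_linear_mulx] cpoly_linear_scale[OF cpoly_linear_mulx]
      mulx_commute[of a])

lemma pd_pone: "pd a pone = (\<lambda>_. 0)"
  unfolding pd_def pone_def by (auto simp: fun_eq_iff)

lemma lap_pone: "lap etaI pone = (\<lambda>_. 0)"
  unfolding lap_def pd_pone cpoly_linear_zero[OF cpoly_linear_pd] by simp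

text \<open>The degree is an integer so that negative degrees are allowed; they force the
  polynomial to vanish.\<close>

definition homogeneous :: "int \<Rightarrow> 'n::finite cpoly \<Rightarrow> bool" where
  "homogeneous e p \<longleftrightarrow> (\<forall>m. p m \<noteq> 0 \<longrightarrow> int (mdeg m) = e)"

lemma homogeneous_zero: "homogeneous e (\<lambda>_. 0)"
  unfolding homogeneous_def by simp

lemma homogeneous_add: "homogeneous e p \<Longrightarrow> homogeneous e q \<Longrightarrow> homogeneous e (\<lambda>m. p m + q m)"
  unfolding homogeneous_def by (metis add.right_neutral add_0)

lemma homogeneous_scale: "homogeneous e p \<Longrightarrow> homogeneous e (\<lambda>m. k * p m)"
  unfolding homogeneous_def by simp

lemma homogeneous_sum:
  "(\<And>i. i \<in> I \<Longrightarrow> homogeneous e (f i)) \<Longrightarrow> homogeneous e (\<lambda>m. \<Sum>i\<in>I. f i m)"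
  unfolding homogeneous_def by (metis (mono_tags, lifting) sum.neutral)

lemma homogeneous_negative_degree: "homogeneous e p \<Longrightarrow> e < 0 \<Longrightarrow> p = (\<lambda>_. 0)"
  unfolding homogeneous_def by fastforce

lemma homogeneous_pone: "homogeneous 0 pone"
  unfolding homogeneous_def pone_def mdeg_def by auto

lemma homogeneous_mulx:
  assumes "homogeneous e p"
  shows "homogeneous (e + 1) (mulx a p)"
  unfolding homogeneous_def
proof (intro allI impI)
  fix m
  assume "mulx a p m \<noteq> 0"
  then have "0 < m a" "p (m(a := m a - 1)) \<noteq> 0"
    unfolding mulx_def by (auto split: if_splits)
  moreover have "mdeg (m(a := m a - 1)) + m a = mdeg m + (m a - 1)" by (rule mdeg_fun_upd)
  ultimately show "int (mdeg m) = e + 1"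
    using assms unfolding homogeneous_def by fastforce
qed

lemma homogeneous_pd:
  assumes "homogeneous e p"
  shows "homogeneous (e - 1) (pd a p)"
  unfolding homogeneous_def
proof (intro allI impI)
  fix m
  assume "pd a p m \<noteq> 0"
  then have "p (m(a := m a + 1)) \<noteq> 0" unfolding pd_def by auto
  moreover have "mdeg (m(a := m a + 1)) + m a = mdeg m + (m a + 1)" by (rule mdeg_fun_upd)
  ultimately show "int (mdeg m) = e - 1"
    using assms unfolding homogeneous_def by fastforce
qed

lemma homogeneous_mulQ: "homogeneous e p \<Longrightarrow> homogeneous (e + 2) (mulQ eta p)"
  using homogeneous_mulx[OF homogeneous_mulx, of e p]
  unfolding mulQ_def by (auto intro!: homogeneous_sum homogeneous_scale simp: algebra_simps)

lemma homogeneous_lap: "homogeneous e p \<Longrightarrow> homogeneous (e - 2) (lap etaI p)"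
  using homogeneous_pd[OF homogeneous_pd, of e p]
  unfolding lap_def by (auto intro!: homogeneous_sum homogeneous_scale simp: algebra_simps)

lemma homogeneous_pdup: "homogeneous e p \<Longrightarrow> homogeneous (e - 1) (pdup etaI a p)"
  unfolding pdup_def using homogeneous_pd by (auto intro!: homogeneous_sum homogeneous_scale)

lemma homogeneous_mulQ_power: "homogeneous e p \<Longrightarrow> homogeneous (e + 2 * int k) ((mulQ eta ^^ k) p)"
proof (induction k)
  case (Suc k)
  then show ?case using homogeneous_mulQ[OF Suc.IH[OF Suc.prems], of eta] by (simp add: algebra_simps)
qed simp

lemma sum_mulx_pd_homogeneous:
  assumes "homogeneous e p"
  shows "(\<Sum>b\<in>UNIV. mulx b (pd b p) m) = of_int e * p m"
proof (cases "p m = 0")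
  case False
  then have "int (mdeg m) = e" using assms unfolding homogeneous_def by blast
  then show ?thesis unfolding sum_mulx_pd by (metis of_int_of_nat_eq)
qed (simp add: sum_mulx_pd)

lemma xtilde_homogeneous:
  fixes \<psi> :: "'n::finite cpoly"
  assumes "homogeneous d \<psi>"
  shows "xtilde eta etaI a \<psi> = (\<lambda>m. mulx a \<psi> m
    + inverse (2 - 2 * of_int d - of_nat CARD('n)) * mulQ eta (pdup etaI a \<psi>) m)"
proof
  fix m
  have hom: "homogeneous (d + 1) (mulQ eta (pdup etaI a \<psi>))"
    using homogeneous_mulQ[OF homogeneous_pdup[OF assms]] by (simp add: algebra_simps)
  show "xtilde eta etaI a \<psi> m = mulx a \<psi> m
    + inverse (2 - 2 * of_int d - of_nat CARD('n)) * mulQ eta (pdup etaI a \<psi>) m"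
  proof (cases "mulQ eta (pdup etaI a \<psi>) m = 0")
    case True
    then show ?thesis unfolding xtilde_def inv2H4_def by simp
  next
    case False
    then have "int (mdeg m) = d + 1" using hom unfolding homogeneous_def by blast
    then have "(of_nat (mdeg m) :: complex) = of_int (d + 1)" by (metis of_int_of_nat_eq)
    then have "(4 - 2 * of_nat (mdeg m) - of_nat CARD('n) :: complex)
        = 2 - 2 * of_int d - of_nat CARD('n)"
      by simp
    then show ?thesis unfolding xtilde_def inv2H4_def by (simp add: divide_inverse mult.commute)
  qed
qed

lemma homogeneous_xtilde:
  assumes "homogeneous d \<psi>"
  shows "homogeneous (d + 1) (xtilde eta etaI a \<psi>)"
  unfolding xtilde_homogeneous[OF assms]
  using homogeneous_mulQ[OF homogeneous_pdup[OF assms]]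
  by (intro homogeneous_add homogeneous_mulx assms homogeneous_scale) (simp add: algebra_simps)

lemma homogeneous_xtilde_word: "homogeneous (int (length as)) (foldr (xtilde eta etaI) as pone)"
  by (induction as) (auto simp: homogeneous_pone add.commute dest: homogeneous_xtilde)

lemma xtilde_word_mod_mulQ:
  fixes as :: "'n::finite list"
  shows "\<exists>S. homogeneous (int (length as) - 2) S
     \<and> foldr (xtilde eta etaI) as pone = (\<lambda>m. foldr mulx as pone m + mulQ eta S m)"
proof (induction as)
  case Nil
  have "pone = (\<lambda>m. pone m + mulQ eta (\<lambda>_. 0) m)"
    by (simp add: cpoly_linear_zero[OF cpoly_linear_mulQ])
  then show ?case using homogeneous_zero by auto
next
  case (Cons a as)
  define \<psi> where "\<psi> = foldr (xtilde eta etaI) as pone"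
  define \<kappa> :: complex where "\<kappa> = inverse (2 - 2 * of_int (int (length as)) - of_nat CARD('n))"
  obtain S where hom_S: "homogeneous (int (length as) - 2) S"
    and \<psi>_S: "\<psi> = (\<lambda>m. foldr mulx as pone m + mulQ eta S m)"
    using Cons.IH unfolding \<psi>_def by blast
  have hom_\<psi>: "homogeneous (int (length as)) \<psi>"
    unfolding \<psi>_def by (rule homogeneous_xtilde_word)
  define S' where "S' = (\<lambda>m. mulx a S m + \<kappa> * pdup etaI a \<psi> m)"
  have hom_S': "homogeneous (int (length (a # as)) - 2) S'"
    using homogeneous_mulx[OF hom_S, of a] homogeneous_pdup[OF hom_\<psi>, of etaI a]
    unfolding S'_def by (intro homogeneous_add homogeneous_scale) (simp_all add: algebra_simps)
  have "xtilde eta etaI a \<psi> = (\<lambda>m. mulx a \<psi> m + \<kappa> * mulQ eta (pdup etaI a \<psi>) m)"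
    unfolding \<kappa>_def by (rule xtilde_homogeneous[OF hom_\<psi>])
  also have "\<dots> = (\<lambda>m. foldr mulx (a # as) pone m + mulQ eta S' m)"
    unfolding S'_def
    by (subst (1) \<psi>_S) (simp add: cpoly_linear_add[OF cpoly_linear_mulx] cpoly_linear_add[OF cpoly_linear_mulQ]
        cpoly_linear_scale[OF cpoly_linear_mulQ] mulx_mulQ algebra_simps)
  finally show ?case using hom_S' unfolding \<psi>_def by auto
qed

lemma finite_lists_length: "finite {as :: 'n::finite list. length as = l}"
  using finite_lists_length_eq[of "UNIV :: 'n set" l] by simp

lemma tildeOf_mod_mulQ:
  "\<exists>T. homogeneous (int l - 2) T \<and> tildeOf eta etaI l c = (\<lambda>m. polyOf l c m + mulQ eta T m)"
proof -
  define S where "S as = (SOME S. homogeneous (int (length as) - 2) S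
    \<and> foldr (xtilde eta etaI) as pone = (\<lambda>m. foldr mulx as pone m + mulQ eta S m))" for as
  have S: "homogeneous (int (length as) - 2) (S as)
    \<and> foldr (xtilde eta etaI) as pone = (\<lambda>m. foldr mulx as pone m + mulQ eta (S as) m)" for as
    unfolding S_def by (rule someI_ex[OF xtilde_word_mod_mulQ])
  define T where "T = (\<lambda>m. \<Sum>as\<in>{as. length as = l}. c as * S as m)"
  have "homogeneous (int l - 2) T"
    unfolding T_def using S by (auto intro!: homogeneous_sum homogeneous_scale)
  moreover have "tildeOf eta etaI l c = (\<lambda>m. polyOf l c m + mulQ eta T m)"
    unfolding tildeOf_def polyOf_def T_def S[THEN conjunct2]
    by (simp add: cpoly_linear_sum[OF cpoly_linear_mulQ finite_lists_length]
        cpoly_linear_scale[OF cpoly_linear_mulQ] sum.distrib distrib_left)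
  ultimately show ?thesis by blast
qed

lemma sum_sum_if_eq:
  "(\<Sum>b\<in>(UNIV::'a::finite set). \<Sum>c\<in>C. if b = a then g c else 0) = (\<Sum>c\<in>C. g c)"
  by (subst sum.swap) simp

locale nondegenerate_metric =
  fixes eta etaI :: "'n::finite \<Rightarrow> 'n \<Rightarrow> complex"
  assumes eta_sym: "\<And>a b. eta a b = eta b a"
    and etaI_eta: "\<And>a c. (\<Sum>b\<in>UNIV. etaI a b * eta b c) = (if a = c then 1 else 0)"
begin

lemma etaI_sym: "etaI a c = etaI c a"
proof -
  have "etaI a c = (\<Sum>b\<in>UNIV. etaI a b * (\<Sum>d\<in>UNIV. etaI c d * eta d b))"
    by (simp add: etaI_eta flip: of_bool_def)
  also have "\<dots> = (\<Sum>d\<in>UNIV. etaI c d * (\<Sum>b\<in>UNIV. etaI a b * eta b d))"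
    unfolding sum_distrib_left
    by (subst sum.swap) (simp add: eta_sym mult.commute mult.left_commute)
  also have "\<dots> = etaI c a" by (simp add: etaI_eta flip: of_bool_def)
  finally show ?thesis .
qed

lemma contract_etaI_eta:
  "(\<Sum>b\<in>UNIV. \<Sum>c\<in>UNIV. etaI b c * (\<Sum>e\<in>UNIV. eta c e * f b e)) = (\<Sum>b\<in>UNIV. f b b)"
proof -
  have "(\<Sum>b\<in>UNIV. \<Sum>c\<in>UNIV. etaI b c * (\<Sum>e\<in>UNIV. eta c e * f b e))
     = (\<Sum>b\<in>UNIV. \<Sum>e\<in>UNIV. (\<Sum>c\<in>UNIV. etaI b c * eta c e) * f b e)"
    unfolding sum_distrib_left sum_distrib_right by (subst (2) sum.swap) (simp add: mult.assoc)
  then show ?thesis by (simp add: etaI_eta flip: of_bool_def)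
qed

lemma pd_mulQ:
  "pd a (mulQ eta p) = (\<lambda>m. mulQ eta (pd a p) m + 2 * (\<Sum>c\<in>UNIV. eta a c * mulx c p m))"
proof
  fix m
  have leibniz: "eta b c * pd a (mulx b (mulx c p)) m = eta b c * mulx b (mulx c (pd a p)) m
      + (if c = a then eta b a * mulx b p m else 0) + (if b = a then eta a c * mulx c p m else 0)"
    for b c
    by (cases "a = c") (auto simp: pd_mulx cpoly_linear_add[OF cpoly_linear_mulx] distrib_left)
  have "pd a (mulQ eta p) m = (\<Sum>b\<in>UNIV. \<Sum>c\<in>UNIV. eta b c * pd a (mulx b (mulx c p)) m)"
    unfolding mulQ_def by (simp add: cpoly_linear_sum[OF cpoly_linear_pd] cpoly_linear_scale[OF cpoly_linear_pd])
  also have "\<dots> = mulQ eta (pd a p) m + (\<Sum>b\<in>UNIV. eta b a * mulx b p m) + (\<Sum>c\<in>UNIV. eta a c * mulx c p m)"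
    unfolding leibniz mulQ_def by (simp add: sum.distrib sum_sum_if_eq)
  finally show "pd a (mulQ eta p) m = mulQ eta (pd a p) m + 2 * (\<Sum>c\<in>UNIV. eta a c * mulx c p m)"
    by (simp add: eta_sym[of _ a])
qed

lemma lap_mulx: "lap etaI (mulx a p) = (\<lambda>m. mulx a (lap etaI p) m + 2 * pdup etaI a p m)"
proof
  fix m
  have "pd b (pd c (mulx a p)) m = mulx a (pd b (pd c p)) m
      + (if b = a then pd c p m else 0) + (if c = a then pd b p m else 0)" for b c
    by (cases "c = a") (simp_all add: pd_mulx cpoly_linear_add[OF cpoly_linear_pd])
  then have "etaI b c * pd b (pd c (mulx a p)) m = etaI b c * mulx a (pd b (pd c p)) m
      + (if b = a then etaI a c * pd c p m else 0) + (if c = a then etaI a b * pd b p m else 0)" for b c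
    by (auto simp: distrib_left etaI_sym)
  then have "lap etaI (mulx a p) m = mulx a (lap etaI p) m + pdup etaI a p m + pdup etaI a p m"
    unfolding lap_def
    by (simp add: sum.distrib sum_sum_if_eq cpoly_linear_sum[OF cpoly_linear_mulx]
        cpoly_linear_scale[OF cpoly_linear_mulx] pdup_def)
  then show "lap etaI (mulx a p) m = mulx a (lap etaI p) m + 2 * pdup etaI a p m" by simp
qed

lemma pd_pd_mulQ: "pd b (pd c (mulQ eta p)) m = mulQ eta (pd b (pd c p)) m
   + 2 * (\<Sum>e\<in>UNIV. eta b e * mulx e (pd c p) m)
   + 2 * (\<Sum>e\<in>UNIV. eta c e * mulx e (pd b p) m) + 2 * eta c b * p m"
proof -
  have "eta c e * pd b (mulx e p) m = eta c e * mulx e (pd b p) m + (if e = b then eta c b * p m else 0)"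
    for e
    by (auto simp: pd_mulx distrib_left)
  then have "(\<Sum>e\<in>UNIV. eta c e * pd b (mulx e p) m)
      = (\<Sum>e\<in>UNIV. eta c e * mulx e (pd b p) m) + eta c b * p m"
    by (simp add: sum.distrib)
  moreover have "pd b (pd c (mulQ eta p)) m = pd b (mulQ eta (pd c p)) m
     + 2 * (\<Sum>e\<in>UNIV. eta c e * pd b (mulx e p) m)"
    unfolding pd_mulQ[of c]
    by (simp add: cpoly_linear_add[OF cpoly_linear_pd] cpoly_linear_scale[OF cpoly_linear_pd]
        cpoly_linear_sum[OF cpoly_linear_pd])
  ultimately show ?thesis unfolding pd_mulQ[of b] by (simp add: algebra_simps)
qed

lemma lap_mulQ:
  assumes "homogeneous e p"
  shows "lap etaI (mulQ eta p)
    = (\<lambda>m. mulQ eta (lap etaI p) m + (2 * of_nat CARD('n) + 4 * of_int e) * p m)"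
proof
  fix m
  have "lap etaI (mulQ eta p) m =
       (\<Sum>b\<in>UNIV. \<Sum>c\<in>UNIV. etaI b c * mulQ eta (pd b (pd c p)) m)
     + 2 * (\<Sum>b\<in>UNIV. \<Sum>c\<in>UNIV. etaI c b * (\<Sum>e\<in>UNIV. eta b e * mulx e (pd c p) m))
     + 2 * (\<Sum>b\<in>UNIV. \<Sum>c\<in>UNIV. etaI b c * (\<Sum>e\<in>UNIV. eta c e * mulx e (pd b p) m))
     + 2 * (\<Sum>b\<in>UNIV. \<Sum>c\<in>UNIV. etaI b c * eta c b) * p m"
    unfolding lap_def pd_pd_mulQ
    by (simp add: distrib_left sum.distrib sum_distrib_left sum_distrib_right etaI_sym[of _ b for b]
        algebra_simps)
  also have "(\<Sum>b\<in>UNIV. \<Sum>c\<in>UNIV. etaI b c * mulQ eta (pd b (pd c p)) m) = mulQ eta (lap etaI p) m"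
    unfolding lap_def by (simp add: cpoly_linear_sum[OF cpoly_linear_mulQ] cpoly_linear_scale[OF cpoly_linear_mulQ])
  also have "(\<Sum>b\<in>UNIV. \<Sum>c\<in>UNIV. etaI c b * (\<Sum>e\<in>UNIV. eta b e * mulx e (pd c p) m)) = of_int e * p m"
    by (subst sum.swap) (simp add: contract_etaI_eta sum_mulx_pd_homogeneous[OF assms])
  also have "(\<Sum>b\<in>UNIV. \<Sum>c\<in>UNIV. etaI b c * (\<Sum>e\<in>UNIV. eta c e * mulx e (pd b p) m)) = of_int e * p m"
    by (simp add: contract_etaI_eta sum_mulx_pd_homogeneous[OF assms])
  also have "(\<Sum>b\<in>UNIV. \<Sum>c\<in>UNIV. etaI b c * eta c b) = of_nat CARD('n)"
    by (simp add: etaI_eta)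
  finally show "lap etaI (mulQ eta p) m = mulQ eta (lap etaI p) m + (2 * of_nat CARD('n) + 4 * of_int e) * p m"
    by (simp add: algebra_simps)
qed

lemma lap_pdup: "lap etaI (pdup etaI a p) = pdup etaI a (lap etaI p)"
proof
  fix m
  have "lap etaI (pdup etaI a p) m
      = (\<Sum>b\<in>UNIV. \<Sum>c\<in>UNIV. \<Sum>e\<in>UNIV. etaI b c * (etaI a e * pd e (pd b (pd c p)) m))"
    unfolding lap_def pdup_def
    by (simp add: cpoly_linear_sum[OF cpoly_linear_pd] cpoly_linear_scale[OF cpoly_linear_pd]
        sum_distrib_left pd_commute[of _ e for e])
  also have "\<dots> = (\<Sum>e\<in>UNIV. \<Sum>b\<in>UNIV. \<Sum>c\<in>UNIV. etaI a e * (etaI b c * pd e (pd b (pd c p)) m))"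
    by (subst sum.swap, subst (2) sum.swap) (simp add: algebra_simps)
  also have "\<dots> = pdup etaI a (lap etaI p) m"
    unfolding lap_def pdup_def
    by (simp add: cpoly_linear_sum[OF cpoly_linear_pd] cpoly_linear_scale[OF cpoly_linear_pd] sum_distrib_left)
  finally show "lap etaI (pdup etaI a p) m = pdup etaI a (lap etaI p) m" .
qed

lemma lap_mulQ_power:
  assumes "homogeneous e p"
  shows "lap etaI ((mulQ eta ^^ Suc j) p) = (\<lambda>m. (mulQ eta ^^ Suc j) (lap etaI p) m
     + of_int (int (Suc j) * (2 * int CARD('n) + 4 * e + 4 * int j)) * (mulQ eta ^^ j) p m)"
proof (induction j)
  case 0
  then show ?case using lap_mulQ[OF assms] by (simp add: algebra_simps)
next
  case (Suc j)
  have hom: "homogeneous (e + 2 * int (Suc j)) ((mulQ eta ^^ Suc j) p)"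
    by (rule homogeneous_mulQ_power[OF assms])
  show ?case
  proof
    fix m
    have "lap etaI ((mulQ eta ^^ Suc (Suc j)) p) m = mulQ eta (lap etaI ((mulQ eta ^^ Suc j) p)) m
       + (2 * of_nat CARD('n) + 4 * of_int (e + 2 * int (Suc j))) * (mulQ eta ^^ Suc j) p m"
      using lap_mulQ[OF hom] by simp
    also have "mulQ eta (lap etaI ((mulQ eta ^^ Suc j) p)) m = (mulQ eta ^^ Suc (Suc j)) (lap etaI p) m
       + of_int (int (Suc j) * (2 * int CARD('n) + 4 * e + 4 * int j)) * (mulQ eta ^^ Suc j) p m"
      unfolding Suc.IH by (simp add: cpoly_linear_add[OF cpoly_linear_mulQ] cpoly_linear_scale[OF cpoly_linear_mulQ])
    finally show "lap etaI ((mulQ eta ^^ Suc (Suc j)) p) m = (mulQ eta ^^ Suc (Suc j)) (lap etaI p) m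
      + of_int (int (Suc (Suc j)) * (2 * int CARD('n) + 4 * e + 4 * int (Suc j))) * (mulQ eta ^^ Suc j) p m"
      by (simp add: algebra_simps)
  qed
qed

lemma harmonic_mulQ_power_reduce:
  assumes hom: "homogeneous e T" and "0 \<le> e"
    and harm: "lap etaI ((mulQ eta ^^ Suc k) T) = (\<lambda>_. 0)"
  shows "\<exists>T'. homogeneous (e - 2) T' \<and> (mulQ eta ^^ Suc k) T = (mulQ eta ^^ Suc (Suc k)) T'"
proof -
  define c where "c = complex_of_int (int (Suc k) * (2 * int CARD('n) + 4 * e + 4 * int k))"
  have "0 < int CARD('n)" by simp
  with \<open>0 \<le> e\<close> have "0 < 2 * int CARD('n) + 4 * e + 4 * int k" by linarith
  then have "c \<noteq> 0" unfolding c_def of_int_eq_0_iff by simp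
  define T' where "T' = (\<lambda>m. (- 1 / c) * lap etaI T m)"
  have "(mulQ eta ^^ k) T = (mulQ eta ^^ Suc k) T'"
  proof
    fix m
    have "(mulQ eta ^^ Suc k) (lap etaI T) m + c * (mulQ eta ^^ k) T m = 0"
      using fun_cong[OF harm, of m] unfolding lap_mulQ_power[OF hom] c_def by simp
    then have "(mulQ eta ^^ k) T m = (- 1 / c) * (mulQ eta ^^ Suc k) (lap etaI T) m"
      using \<open>c \<noteq> 0\<close> by (simp add: field_simps add_eq_0_iff2)
    then show "(mulQ eta ^^ k) T m = (mulQ eta ^^ Suc k) T' m"
      unfolding T'_def cpoly_linear_scale[OF cpoly_linear_funpow[OF cpoly_linear_mulQ]] .
  qed
  moreover have "homogeneous (e - 2) T'"
    unfolding T'_def by (intro homogeneous_scale homogeneous_lap hom)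
  ultimately show ?thesis by auto
qed

lemma harmonic_mulQ_power_eq_zero:
  assumes "homogeneous e T" and "lap etaI ((mulQ eta ^^ Suc k) T) = (\<lambda>_. 0)"
  shows "(mulQ eta ^^ Suc k) T = (\<lambda>_. 0)"
  using assms
proof (induction "nat (e + 2)" arbitrary: e k T rule: less_induct)
  case less
  show ?case
  proof (cases "e < 0")
    case True
    then show ?thesis
      using homogeneous_negative_degree[OF less.prems(1)]
        cpoly_linear_zero[OF cpoly_linear_funpow[OF cpoly_linear_mulQ]] by metis
  next
    case False
    then obtain T' where T': "homogeneous (e - 2) T'"
      and eq: "(mulQ eta ^^ Suc k) T = (mulQ eta ^^ Suc (Suc k)) T'"
      using harmonic_mulQ_power_reduce less.prems by (metis not_less)
    have "(mulQ eta ^^ Suc (Suc k)) T' = (\<lambda>_. 0)"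
    proof (rule less.hyps[OF _ T'])
      show "nat (e - 2 + 2) < nat (e + 2)" using False by simp
      show "lap etaI ((mulQ eta ^^ Suc (Suc k)) T') = (\<lambda>_. 0)"
        using less.prems(2) by (simp only: eq)
    qed
    with eq show ?thesis by simp
  qed
qed

lemma harmonic_xtilde:
  assumes hom: "homogeneous d \<psi>" and harm: "lap etaI \<psi> = (\<lambda>_. 0)"
    and "2 * d + int CARD('n) \<noteq> 2"
  shows "lap etaI (xtilde eta etaI a \<psi>) = (\<lambda>_. 0)"
proof -
  define \<kappa> :: complex where "\<kappa> = inverse (2 - 2 * of_int d - of_nat CARD('n))"
  have "(2 - 2 * of_int d - of_nat CARD('n) :: complex) = of_int (2 - 2 * d - int CARD('n))"
    by simp
  with assms(3) have nonzero: "(2 - 2 * of_int d - of_nat CARD('n) :: complex) \<noteq> 0"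
    by (simp only: of_int_eq_0_iff)
  have "lap etaI (xtilde eta etaI a \<psi>)
      = (\<lambda>m. lap etaI (mulx a \<psi>) m + \<kappa> * lap etaI (mulQ eta (pdup etaI a \<psi>)) m)"
    unfolding xtilde_homogeneous[OF hom] \<kappa>_def
    by (simp add: cpoly_linear_add[OF cpoly_linear_lap] cpoly_linear_scale[OF cpoly_linear_lap])
  also have "\<dots> = (\<lambda>m. (2 + \<kappa> * (2 * of_nat CARD('n) + 4 * of_int (d - 1))) * pdup etaI a \<psi> m)"
    unfolding lap_mulx lap_mulQ[OF homogeneous_pdup[OF hom]] harm lap_pdup
      cpoly_linear_zero[OF cpoly_linear_mulx] cpoly_linear_zero[OF cpoly_linear_pdup]
      cpoly_linear_zero[OF cpoly_linear_mulQ]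
    by (simp add: algebra_simps)
  also have "2 + \<kappa> * (2 * of_nat CARD('n) + 4 * of_int (d - 1)) = 0"
    unfolding \<kappa>_def using nonzero by (simp add: field_simps)
  finally show ?thesis by simp
qed

lemma harmonic_xtilde_word:
  assumes "CARD('n) \<ge> 3"
  shows "lap etaI (foldr (xtilde eta etaI) as pone) = (\<lambda>_. 0)"
proof (induction as)
  case Nil
  show ?case by (simp add: lap_pone)
next
  case (Cons a as)
  have "2 * int (length as) + int CARD('n) \<noteq> 2" using assms by linarith
  then show ?case using harmonic_xtilde[OF homogeneous_xtilde_word Cons.IH] by simp
qed

lemma harmonic_tildeOf:
  assumes "CARD('n) \<ge> 3"
  shows "lap etaI (tildeOf eta etaI l c) = (\<lambda>_. 0)"
  unfolding tildeOf_def
  by (simp add: cpoly_linear_sum[OF cpoly_linear_lap finite_lists_length]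
      cpoly_linear_scale[OF cpoly_linear_lap] harmonic_xtilde_word[OF assms])

end

theorem mainTheorem9:
  fixes eta etaI :: "'n::finite \<Rightarrow> 'n \<Rightarrow> complex"
    and l :: nat and c :: "'n list \<Rightarrow> complex"
  assumes n3: "CARD('n) \<ge> 3"
    and sym: "\<And>a b. eta a b = eta b a"
    and inv1: "\<And>a c. (\<Sum>b\<in>UNIV. eta a b * etaI b c) = (if a = c then 1 else 0)"
    and inv2: "\<And>a c. (\<Sum>b\<in>UNIV. etaI a b * eta b c) = (if a = c then 1 else 0)"
    and harm: "lap etaI (polyOf l c) = (\<lambda>_. 0)"
  shows "tildeOf eta etaI l c = polyOf l c"
proof -
  interpret nondegenerate_metric eta etaI
    by unfold_locales (fact sym inv2)+
  obtain T where hom_T: "homogeneous (int l - 2) T"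
    and eq: "tildeOf eta etaI l c = (\<lambda>m. polyOf l c m + mulQ eta T m)"
    using tildeOf_mod_mulQ by blast
  have "lap etaI (tildeOf eta etaI l c) = (\<lambda>m. lap etaI (polyOf l c) m + lap etaI (mulQ eta T) m)"
    unfolding eq by (rule cpoly_linear_add[OF cpoly_linear_lap])
  then have "lap etaI (mulQ eta T) = (\<lambda>_. 0)"
    using harmonic_tildeOf[OF n3] harm by (simp add: fun_eq_iff)
  then have "mulQ eta T = (\<lambda>_. 0)"
    using harmonic_mulQ_power_eq_zero[OF hom_T, of 0] by simp
  with eq show ?thesis by simp
qed

end
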